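(* Let $r\geq 1$, $k\geq 3$, $1\le d\le r$, and let $I_d\subseteq\{1,\dots,r\}$ with $|I_d|=d$. Then for every $n\geq k+1$, every $m$ with $2\leq m\leq k-1$, and every $\phi\in T_{k,r}^m(I_d)$, $$\bigl|S_n^{(r)}\bigl(T_{k,r}^m(I_d);\phi\bigr)\bigr|=\prod_{j=k+1}^n\bigl(d(k-1)+(r-d)j\bigr).$$
   Context: For $n,r\ge1$, $S_n^{(r)}$ denotes the set of coloured permutations of length $n$ with $r$ colours: sequences $\phi=(\phi_1,\dots,\phi_n)$ where $\phi_i=a_i^{(c_i)}$, $(a_1,\dots,a_n)$ is a permutation of $\{1,\dots,n\}$ and each $c_i\in\{1,\dots,r\}$ is the colour of $a_i$. For $\phi=(\tau_1^{(s_1)},\dots,\tau_k^{(s_k)})\in S_k^{(r)}$ and $\psi=(\alpha_1^{(v_1)},\dots,\alpha_n^{(v_n)})\in S_n^{(r)}$, an occurrence of $\phi$ in $\psi$ is a sequence of indices $1\le i_1<\dots<i_k\le n$ such that $(\alpha_{i_1},\dots,\alpha_{i_k})$ is order-isomorphic to $(\tau_1,\dots,\tau_k)$ and $v_{i_j}=s_j$ for all $j$. $\psi$ contains $\phi$ if there is at least one occurrence, and avoids $\phi$ otherwise; $\psi$ contains $\phi$ exactly once if there is exactly one occurrence. For $I_d\subseteq\{1,\dots,r\}$ with $|I_d|=d$ and $1\le m\le k$, $T_{k,r}^m(I_d)$ is the set of all $\phi\in S_k^{(r)}$ whose first entry is $\phi_1=m^{(c)}$ for some colour $c\in I_d$.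 For $\phi\in T_{k,r}^m(I_d)$, $S_n^{(r)}(T_{k,r}^m(I_d);\phi)$ denotes the set of $\psi\in S_n^{(r)}$ that avoid every pattern in $T_{k,r}^m(I_d)\setminus\{\phi\}$ and contain $\phi$ exactly once. *)

theory Defs
  imports Main
begin

text \<open>A coloured permutation is a list of pairs (a, c): entry value a and colour c.
  Positions are 0-indexed in lists.\<close>

definition coloured_perms :: "nat \<Rightarrow> nat \<Rightarrow> (nat \<times> nat) list set" where
  "coloured_perms n r = {\<psi>. length \<psi> = n \<and> distinct (map fst \<psi>) \<and> set (map fst \<psi>) = {1..n}
       \<and> (\<forall>x\<in>set \<psi>. snd x \<in> {1..r})}"

definition occurrences :: "(nat \<times> nat) list \<Rightarrow> (nat \<times> nat) list \<Rightarrow> nat list set" where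
  "occurrences \<phi> \<psi> = {is. length is = length \<phi> \<and> sorted_wrt (<) is
       \<and> (\<forall>i\<in>set is. i < length \<psi>)
       \<and> (\<forall>j<length \<phi>. \<forall>l<length \<phi>.
             (fst (\<psi> ! (is ! j)) < fst (\<psi> ! (is ! l)) \<longleftrightarrow> fst (\<phi> ! j) < fst (\<phi> ! l)))
       \<and> (\<forall>j<length \<phi>. snd (\<psi> ! (is ! j)) = snd (\<phi> ! j))}"

definition contains :: "(nat \<times> nat) list \<Rightarrow> (nat \<times> nat) list \<Rightarrow> bool" where
  "contains \<psi> \<phi> \<longleftrightarrow> occurrences \<phi> \<psi> \<noteq> {}"

definition avoids :: "(nat \<times> nat) list \<Rightarrow> (nat \<times> nat) list \<Rightarrow> bool" where
  "avoids \<psi> \<phi> \<longleftrightarrow> \<not> contains \<psi> \<phi>"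

definition contains_once :: "(nat \<times> nat) list \<Rightarrow> (nat \<times> nat) list \<Rightarrow> bool" where
  "contains_once \<psi> \<phi> \<longleftrightarrow> card (occurrences \<phi> \<psi>) = 1"

definition T_set :: "nat \<Rightarrow> nat \<Rightarrow> nat \<Rightarrow> nat set \<Rightarrow> (nat \<times> nat) list set" where
  "T_set k r m I = {\<phi> \<in> coloured_perms k r. fst (hd \<phi>) = m \<and> snd (hd \<phi>) \<in> I}"

definition S_set :: "nat \<Rightarrow> nat \<Rightarrow> (nat \<times> nat) list set \<Rightarrow> (nat \<times> nat) list \<Rightarrow> (nat \<times> nat) list set" where
  "S_set n r T \<phi> = {\<psi> \<in> coloured_perms n r. (\<forall>\<tau>\<in>T - {\<phi>}. avoids \<psi> \<tau>) \<and> contains_once \<psi> \<phi>}"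

end

theory Submission
  imports Defs
begin

text \<open>Call a position \<open>i\<close> of \<open>\<psi>\<close> a potential start if its colour lies in \<open>I\<close> and at least
  \<open>m - 1\<close> smaller and \<open>k - m\<close> larger entries follow it. These are exactly the first positions
  of occurrences of patterns of \<open>T\<close>, because any \<open>k\<close> positions form an occurrence of their
  reduction. As \<open>2 \<le> m \<le> k - 1\<close>, a potential start followed by at least \<open>k\<close> entries starts
  two different such occurrences. Hence \<open>\<psi>\<close> lies in \<open>S_set\<close> iff its last \<open>k\<close> entries form
  an occurrence of \<open>\<phi>\<close> and none of its first \<open>n - k\<close> positions is a potential start.
  Such a \<open>\<psi>\<close> of length \<open>n + 1\<close> arises uniquely by prepending to one of length \<open>n\<close> a first
  entry that is not a potential start, and whatever the rest, \<open>d (k - 1) + (r - d) (n + 1)\<close>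
  values and colours qualify.\<close>

section \<open>Ranks and coloured permutations\<close>

definition rank_in :: "('a \<Rightarrow> 'b::linorder) \<Rightarrow> 'a set \<Rightarrow> 'a \<Rightarrow> nat" where
  "rank_in f J p = Suc (card {q \<in> J. f q < f p})"

lemma rank_in_less_iff:
  assumes "finite J" "p \<in> J" "q \<in> J"
  shows "rank_in f J p < rank_in f J q \<longleftrightarrow> f p < f q"
proof
  assume "f p < f q"
  then have "{x \<in> J. f x < f p} \<subset> {x \<in> J. f x < f q}"
    using assms(2) by auto
  then show "rank_in f J p < rank_in f J q"
    unfolding rank_in_def using assms(1) by (simp add: psubset_card_mono)
next
  assume less: "rank_in f J p < rank_in f J q"
  show "f p < f q"
  proof (rule ccontr)
    assume "\<not> f p < f q"
    then have "{x \<in> J. f x < f q} \<subseteq> {x \<in> J. f x < f p}"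
      by auto
    then have "rank_in f J q \<le> rank_in f J p"
      unfolding rank_in_def using assms(1) by (simp add: card_mono)
    with less show False
      by simp
  qed
qed

lemma bij_betw_rank_in:
  assumes "finite J" "inj_on f J"
  shows "bij_betw (rank_in f J) J {1..card J}"
proof -
  have inj: "inj_on (rank_in f J) J"
  proof (rule inj_onI)
    fix p q assume pq: "p \<in> J" "q \<in> J" "rank_in f J p = rank_in f J q"
    then have "\<not> f p < f q" "\<not> f q < f p"
      using rank_in_less_iff[OF assms(1) pq(1,2), of f] rank_in_less_iff[OF assms(1) pq(2,1), of f]
      by simp_all
    then have "f p = f q"
      by simp
    with \<open>p \<in> J\<close> \<open>q \<in> J\<close> assms(2) show "p = q"
      by (simp add: inj_on_eq_iff)
  qed
  have "rank_in f J ` J \<subseteq> {1..card J}"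
  proof
    fix y assume "y \<in> rank_in f J ` J"
    then obtain p where p: "p \<in> J" "y = rank_in f J p"
      by blast
    have "{q \<in> J. f q < f p} \<subset> J"
      using p(1) by auto
    then have "card {q \<in> J. f q < f p} < card J"
      using assms(1) by (simp add: psubset_card_mono)
    with p show "y \<in> {1..card J}"
      unfolding rank_in_def by simp
  qed
  moreover have "card (rank_in f J ` J) = card {1..card J}"
    using card_image[OF inj] by simp
  ultimately have "rank_in f J ` J = {1..card J}"
    by (rule card_subset_eq[OF finite_atLeastAtMost])
  with inj show ?thesis
    unfolding bij_betw_def by simp
qed

lemma coloured_permsD:
  assumes "\<psi> \<in> coloured_perms n r"
  shows "length \<psi> = n" "distinct (map fst \<psi>)" "set (map fst \<psi>) = {1..n}"
    and "\<And>j. j < n \<Longrightarrow> snd (\<psi> ! j) \<in> {1..r}"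
    and "\<And>j. j < n \<Longrightarrow> fst (\<psi> ! j) \<in> {1..n}"
  using assms unfolding coloured_perms_def by (auto simp: nth_mem)

lemma coloured_perms_bij_betw_values:
  assumes "\<psi> \<in> coloured_perms n r"
  shows "bij_betw (\<lambda>l. fst (\<psi> ! l)) {..<n} {1..n}"
proof -
  have "bij_betw ((!) (map fst \<psi>)) {..<n} {1..n}"
    using coloured_permsD[OF assms] by (intro bij_betw_nth) auto
  moreover have "map fst \<psi> ! l = fst (\<psi> ! l)" if "l \<in> {..<n}" for l
    using that coloured_permsD(1)[OF assms] by simp
  ultimately show ?thesis
    by (subst bij_betw_cong[where g = "(!) (map fst \<psi>)"]) simp_all
qed

lemma coloured_perms_value_eq_iff:
  assumes "\<psi> \<in> coloured_perms n r" "j < n" "l < n"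
  shows "fst (\<psi> ! j) = fst (\<psi> ! l) \<longleftrightarrow> j = l"
  using bij_betw_imp_inj_on[OF coloured_perms_bij_betw_values[OF assms(1)]] assms(2,3)
  by (metis inj_on_eq_iff lessThan_iff)

lemma card_positions_eq_card_values:
  assumes "\<psi> \<in> coloured_perms n r"
  shows "card {l \<in> {..<n}. P (fst (\<psi> ! l))} = card {u \<in> {1..n}. P u}"
  by (rule bij_betw_same_card[OF bij_betw_Collect[OF coloured_perms_bij_betw_values[OF assms]]])
    simp

lemma coloured_perms_value_eq_rank:
  assumes "\<psi> \<in> coloured_perms n r" "j < n"
  shows "fst (\<psi> ! j) = rank_in (\<lambda>l. fst (\<psi> ! l)) {..<n} j"
proof -
  have v: "fst (\<psi> ! j) \<in> {1..n}"
    using coloured_permsD(5)[OF assms] .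
  then have "{u \<in> {1..n}. u < fst (\<psi> ! j)} = {1..<fst (\<psi> ! j)}"
    by auto
  then show ?thesis
    unfolding rank_in_def
    using card_positions_eq_card_values[OF assms(1), of "\<lambda>u. u < fst (\<psi> ! j)"] v
    by simp
qed

lemma coloured_perms_eqI:
  assumes "\<psi>1 \<in> coloured_perms k r" "\<psi>2 \<in> coloured_perms k r"
    and "\<And>j l. j < k \<Longrightarrow> l < k \<Longrightarrow> fst (\<psi>1 ! j) < fst (\<psi>1 ! l) \<longleftrightarrow> fst (\<psi>2 ! j) < fst (\<psi>2 ! l)"
    and "\<And>j. j < k \<Longrightarrow> snd (\<psi>1 ! j) = snd (\<psi>2 ! j)"
  shows "\<psi>1 = \<psi>2"
proof (rule nth_equalityI)
  show "length \<psi>1 = length \<psi>2"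
    using coloured_permsD(1) assms(1,2) by simp
next
  fix j assume "j < length \<psi>1"
  then have j: "j < k"
    using coloured_permsD(1)[OF assms(1)] by simp
  have "fst (\<psi>1 ! j) = rank_in (\<lambda>l. fst (\<psi>1 ! l)) {..<k} j"
    using coloured_perms_value_eq_rank[OF assms(1) j] .
  also have "\<dots> = rank_in (\<lambda>l. fst (\<psi>2 ! l)) {..<k} j"
    unfolding rank_in_def using assms(3)[OF _ j]
    by (intro arg_cong[where f = "\<lambda>X. Suc (card X)"]) auto
  also have "\<dots> = fst (\<psi>2 ! j)"
    by (rule coloured_perms_value_eq_rank[OF assms(2) j, symmetric])
  finally have "fst (\<psi>1 ! j) = fst (\<psi>2 ! j)" .
  with assms(4)[OF j] show "\<psi>1 ! j = \<psi>2 ! j"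
    by (simp add: prod_eq_iff)
qed

section \<open>Occurrences\<close>

lemma T_setD:
  assumes "\<tau> \<in> T_set k r m I" "1 \<le> k"
  shows "\<tau> \<in> coloured_perms k r" "fst (\<tau> ! 0) = m" "snd (\<tau> ! 0) \<in> I"
proof -
  have \<tau>: "\<tau> \<in> coloured_perms k r" "fst (hd \<tau>) = m" "snd (hd \<tau>) \<in> I"
    using assms(1) unfolding T_set_def by auto
  moreover have "hd \<tau> = \<tau> ! 0"
    using coloured_permsD(1)[OF \<tau>(1)] assms(2) by (intro hd_conv_nth) auto
  ultimately show "\<tau> \<in> coloured_perms k r" "fst (\<tau> ! 0) = m" "snd (\<tau> ! 0) \<in> I"
    by simp_all
qed

lemma occurrencesD:
  assumes "is \<in> occurrences \<tau> \<psi>"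
  shows "length is = length \<tau>" "sorted_wrt (<) is" "\<And>x. x \<in> set is \<Longrightarrow> x < length \<psi>"
    and "\<And>j l. j < length \<tau> \<Longrightarrow> l < length \<tau> \<Longrightarrow>
           fst (\<psi> ! (is ! j)) < fst (\<psi> ! (is ! l)) \<longleftrightarrow> fst (\<tau> ! j) < fst (\<tau> ! l)"
    and "\<And>j. j < length \<tau> \<Longrightarrow> snd (\<psi> ! (is ! j)) = snd (\<tau> ! j)"
  using assms unfolding occurrences_def by auto

lemma occurrences_pattern_unique:
  assumes "\<tau>1 \<in> coloured_perms k r" "\<tau>2 \<in> coloured_perms k r"
    and "is \<in> occurrences \<tau>1 \<psi>" "is \<in> occurrences \<tau>2 \<psi>"
  shows "\<tau>1 = \<tau>2"
proof (rule coloured_perms_eqI[OF assms(1,2)])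
  have len: "length \<tau>1 = k" "length \<tau>2 = k"
    using coloured_permsD(1) assms(1,2) by auto
  fix j l assume "j < k" "l < k"
  with len have "fst (\<tau>1 ! j) < fst (\<tau>1 ! l) \<longleftrightarrow> fst (\<psi> ! (is ! j)) < fst (\<psi> ! (is ! l))"
    using occurrencesD(4)[OF assms(3)] by simp
  also have "\<dots> \<longleftrightarrow> fst (\<tau>2 ! j) < fst (\<tau>2 ! l)"
    using occurrencesD(4)[OF assms(4)] len \<open>j < k\<close> \<open>l < k\<close> by simp
  finally show "fst (\<tau>1 ! j) < fst (\<tau>1 ! l) \<longleftrightarrow> fst (\<tau>2 ! j) < fst (\<tau>2 ! l)" .
next
  fix j assume "j < k"
  then show "snd (\<tau>1 ! j) = snd (\<tau>2 ! j)"
    using occurrencesD(5)[OF assms(3)] occurrencesD(5)[OF assms(4)] coloured_permsD(1) assms(1,2)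
    by metis
qed

lemma sorted_wrt_less_eq_upt:
  assumes "sorted_wrt (<) xs" "set xs \<subseteq> {a..<b}" "length xs = b - a"
  shows "xs = [a..<b]"
proof -
  have "card (set xs) = card {a..<b}"
    using assms(1,3) by (simp add: strict_sorted_iff distinct_card)
  then have "set xs = {a..<b}"
    using assms(2) by (simp add: card_subset_eq)
  then show ?thesis
    using assms(1) by (simp add: strict_sorted_equal)
qed

lemma occurrence_eq_upt:
  assumes "is \<in> occurrences \<tau> \<psi>" "length \<tau> = k" "length \<psi> = n" "n - k \<le> is ! 0"
  shows "is = [n - k..<n]"
proof -
  have sorted: "sorted_wrt (<) is"
    using occurrencesD(2)[OF assms(1)] .
  have sub: "set is \<subseteq> {n - k..<n}"
  proof
    fix x assume "x \<in> set is"
    then obtain j where j: "j < length is" "x = is ! j"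
      by (metis in_set_conv_nth)
    then have "is ! 0 \<le> x"
      using sorted_wrt_nth_less[OF sorted, of 0 j] by (cases "j = 0") auto
    moreover have "x < n"
      using occurrencesD(3)[OF assms(1) \<open>x \<in> set is\<close>] assms(3) by simp
    ultimately show "x \<in> {n - k..<n}"
      using assms(4) by simp
  qed
  have "length is = card (set is)"
    using sorted by (simp add: strict_sorted_iff distinct_card)
  also have "\<dots> \<le> n - (n - k)"
    using card_mono[OF finite_atLeastLessThan sub] by simp
  finally have "length is = n - (n - k)"
    using occurrencesD(1)[OF assms(1)] assms(2) by simp
  then show ?thesis
    using sorted_wrt_less_eq_upt[OF sorted sub] by simp
qed

definition reduction :: "(nat \<times> nat) list \<Rightarrow> nat list \<Rightarrow> (nat \<times> nat) list" where
  "reduction \<psi> is = map (\<lambda>p. (rank_in (\<lambda>q. fst (\<psi> ! q)) (set is) p, snd (\<psi> ! p))) is"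

lemma length_reduction [simp]: "length (reduction \<psi> is) = length is"
  by (simp add: reduction_def)

lemma reduction_in_coloured_perms:
  assumes "\<psi> \<in> coloured_perms n r" "distinct is" "set is \<subseteq> {..<n}"
  shows "reduction \<psi> is \<in> coloured_perms (length is) r"
proof -
  let ?f = "\<lambda>q. fst (\<psi> ! q)"
  have "inj_on ?f (set is)"
    using bij_betw_imp_inj_on[OF coloured_perms_bij_betw_values[OF assms(1)]] assms(3)
    by (rule inj_on_subset)
  from bij_betw_rank_in[OF finite_set this]
  have bij: "bij_betw (rank_in ?f (set is)) (set is) {1..length is}"
    by (simp only: distinct_card[OF assms(2)])
  have fst_reduction: "map fst (reduction \<psi> is) = map (rank_in ?f (set is)) is"
    unfolding reduction_def by simp
  have "distinct (map fst (reduction \<psi> is))"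
    unfolding fst_reduction using assms(2) bij_betw_imp_inj_on[OF bij] by (simp add: distinct_map)
  moreover have "set (map fst (reduction \<psi> is)) = {1..length is}"
    unfolding fst_reduction using bij_betw_imp_surj_on[OF bij] by simp
  moreover have "snd x \<in> {1..r}" if "x \<in> set (reduction \<psi> is)" for x
    using that assms(3) coloured_permsD(4)[OF assms(1)] unfolding reduction_def by auto
  ultimately show ?thesis
    unfolding coloured_perms_def by simp
qed

lemma occurrence_reduction:
  assumes "\<psi> \<in> coloured_perms n r" "sorted_wrt (<) is" "set is \<subseteq> {..<n}"
  shows "is \<in> occurrences (reduction \<psi> is) \<psi>"
proof -
  let ?f = "\<lambda>q. fst (\<psi> ! q)"
  have len: "length \<psi> = n"
    using coloured_permsD(1)[OF assms(1)] .
  have nth: "reduction \<psi> is ! j = (rank_in ?f (set is) (is ! j), snd (\<psi> ! (is ! j)))"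
    if "j < length is" for j
    using that unfolding reduction_def by simp
  have "?f (is ! j) < ?f (is ! l) \<longleftrightarrow> fst (reduction \<psi> is ! j) < fst (reduction \<psi> is ! l)"
    if "j < length is" "l < length is" for j l
    using that nth rank_in_less_iff[of "set is" "is ! j" "is ! l" ?f] by simp
  then show ?thesis
    unfolding occurrences_def using assms(2,3) len nth by (auto simp: reduction_def)
qed

section \<open>Positions that can start an occurrence of a pattern of \<open>T\<close>\<close>

definition smaller_after :: "(nat \<times> nat) list \<Rightarrow> nat \<Rightarrow> nat set" where
  "smaller_after \<psi> i = {j. i < j \<and> j < length \<psi> \<and> fst (\<psi> ! j) < fst (\<psi> ! i)}"

definition larger_after :: "(nat \<times> nat) list \<Rightarrow> nat \<Rightarrow> nat set" where
  "larger_after \<psi> i = {j. i < j \<and> j < length \<psi> \<and> fst (\<psi> ! i) < fst (\<psi> ! j)}"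

definition potential_start :: "nat set \<Rightarrow> nat \<Rightarrow> nat \<Rightarrow> (nat \<times> nat) list \<Rightarrow> nat \<Rightarrow> bool" where
  "potential_start I m k \<psi> i \<longleftrightarrow> i < length \<psi> \<and> snd (\<psi> ! i) \<in> I
     \<and> m - 1 \<le> card (smaller_after \<psi> i) \<and> k - m \<le> card (larger_after \<psi> i)"

lemma smaller_after_Int_larger_after: "smaller_after \<psi> i \<inter> larger_after \<psi> i = {}"
  unfolding smaller_after_def larger_after_def by auto

lemma smaller_after_Un_larger_after:
  assumes "\<psi> \<in> coloured_perms n r" "i < n"
  shows "smaller_after \<psi> i \<union> larger_after \<psi> i = {i<..<n}"
proof
  show "smaller_after \<psi> i \<union> larger_after \<psi> i \<subseteq> {i<..<n}"
    using coloured_permsD(1)[OF assms(1)] unfolding smaller_after_def larger_after_def by auto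
next
  show "{i<..<n} \<subseteq> smaller_after \<psi> i \<union> larger_after \<psi> i"
  proof
    fix j assume j: "j \<in> {i<..<n}"
    then have "fst (\<psi> ! j) \<noteq> fst (\<psi> ! i)"
      using coloured_perms_value_eq_iff[OF assms(1), of j i] assms(2) by auto
    with j show "j \<in> smaller_after \<psi> i \<union> larger_after \<psi> i"
      using coloured_permsD(1)[OF assms(1)]
      unfolding smaller_after_def larger_after_def by (auto simp: nat_neq_iff)
  qed
qed

lemma card_pattern_le_card_after:
  assumes occ: "is \<in> occurrences \<tau> \<psi>" and "0 < length \<tau>" and R: "R = (<) \<or> R = (>)"
  shows "card {l \<in> {..<length \<tau>}. R (fst (\<tau> ! l)) (fst (\<tau> ! 0))}
    \<le> card {j. is ! 0 < j \<and> j < length \<psi> \<and> R (fst (\<psi> ! j)) (fst (\<psi> ! (is ! 0)))}"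
proof (rule card_inj_on_le)
  have len: "length is = length \<tau>"
    using occurrencesD(1)[OF occ] .
  have sorted: "sorted_wrt (<) is"
    using occurrencesD(2)[OF occ] .
  show "inj_on ((!) is) {l \<in> {..<length \<tau>}. R (fst (\<tau> ! l)) (fst (\<tau> ! 0))}"
    using sorted len by (intro inj_on_nth) (auto simp: strict_sorted_iff)
  show "(!) is ` {l \<in> {..<length \<tau>}. R (fst (\<tau> ! l)) (fst (\<tau> ! 0))}
    \<subseteq> {j. is ! 0 < j \<and> j < length \<psi> \<and> R (fst (\<psi> ! j)) (fst (\<psi> ! (is ! 0)))}"
  proof (rule image_subsetI)
    fix l assume "l \<in> {l \<in> {..<length \<tau>}. R (fst (\<tau> ! l)) (fst (\<tau> ! 0))}"
    then have l: "l < length \<tau>" "R (fst (\<tau> ! l)) (fst (\<tau> ! 0))"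
      by auto
    have "l \<noteq> 0"
    proof
      assume "l = 0"
      with l(2) R show False
        by auto
    qed
    then have "is ! 0 < is ! l"
      using sorted_wrt_nth_less[OF sorted, of 0 l] l(1) len by simp
    moreover have "is ! l < length \<psi>"
      using occurrencesD(3)[OF occ] l(1) len by simp
    moreover have "R (fst (\<psi> ! (is ! l))) (fst (\<psi> ! (is ! 0)))"
      using R l occurrencesD(4)[OF occ, of l 0] occurrencesD(4)[OF occ, of 0 l] \<open>0 < length \<tau>\<close>
      by auto
    ultimately show "is ! l \<in> {j. is ! 0 < j \<and> j < length \<psi> \<and> R (fst (\<psi> ! j)) (fst (\<psi> ! (is ! 0)))}"
      by simp
  qed
qed simp

lemma potential_start_occurrence_head:
  assumes "\<tau> \<in> T_set k r m I" "is \<in> occurrences \<tau> \<psi>" "1 \<le> k"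
  shows "potential_start I m k \<psi> (is ! 0)"
proof -
  note \<tau> = T_setD[OF assms(1,3)]
  have len: "length \<tau> = k"
    using coloured_permsD(1)[OF \<tau>(1)] .
  have m: "m \<in> {1..k}"
    using coloured_permsD(5)[OF \<tau>(1)] \<tau>(2) assms(3) by fastforce
  then have "{u \<in> {1..k}. u < m} = {1..<m}" "{u \<in> {1..k}. m < u} = {m<..k}"
    by auto
  then have "m - 1 = card {u \<in> {1..k}. u < m}"
    by simp
  also have "\<dots> = card {l \<in> {..<k}. fst (\<tau> ! l) < fst (\<tau> ! 0)}"
    using card_positions_eq_card_values[OF \<tau>(1), of "\<lambda>u. u < m"] \<tau>(2) by simp
  also have "\<dots> \<le> card (smaller_after \<psi> (is ! 0))"
    using card_pattern_le_card_after[OF assms(2), of "(<)"] len assms(3)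
    unfolding smaller_after_def by simp
  finally have smaller: "m - 1 \<le> card (smaller_after \<psi> (is ! 0))" .
  have "k - m = card {u \<in> {1..k}. m < u}"
    using \<open>{u \<in> {1..k}. m < u} = {m<..k}\<close> by simp
  also have "\<dots> = card {l \<in> {..<k}. fst (\<tau> ! 0) < fst (\<tau> ! l)}"
    using card_positions_eq_card_values[OF \<tau>(1), of "\<lambda>u. m < u"] \<tau>(2) by simp
  also have "\<dots> \<le> card (larger_after \<psi> (is ! 0))"
    using card_pattern_le_card_after[OF assms(2), of "(>)"] len assms(3)
    unfolding larger_after_def by simp
  finally have larger: "k - m \<le> card (larger_after \<psi> (is ! 0))" .
  have "is ! 0 < length \<psi>" "snd (\<psi> ! (is ! 0)) = snd (\<tau> ! 0)"
    using occurrencesD(1,3,5)[OF assms(2)] len assms(3) by auto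
  with \<tau>(3) smaller larger show ?thesis
    unfolding potential_start_def by simp
qed

lemma occurrence_at_potential_start:
  assumes \<psi>: "\<psi> \<in> coloured_perms n r" and "i < n" "snd (\<psi> ! i) \<in> I"
    and A: "A \<subseteq> smaller_after \<psi> i" "card A = m - 1"
    and B: "B \<subseteq> larger_after \<psi> i" "card B = k - m" and "1 \<le> m" "m \<le> k"
  obtains \<tau> where "\<tau> \<in> T_set k r m I" "sorted_list_of_set (insert i (A \<union> B)) \<in> occurrences \<tau> \<psi>"
proof -
  let ?f = "\<lambda>q. fst (\<psi> ! q)"
  define J where "J = insert i (A \<union> B)"
  have after: "A \<union> B \<subseteq> {i<..<n}" "A \<inter> B = {}" "{q \<in> J. ?f q < ?f i} = A"
    using A(1) B(1) smaller_after_Un_larger_after[OF \<psi> \<open>i < n\<close>] smaller_after_Int_larger_after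
    unfolding J_def by (blast, blast, auto simp: smaller_after_def larger_after_def)
  then have J: "J \<subseteq> {..<n}" "finite J"
    using \<open>i < n\<close> unfolding J_def by (auto intro: finite_subset)
  have "i \<notin> A \<union> B"
    using after(1) by auto
  then have "card J = k"
    using J(2) after(2) A(2) B(2) \<open>1 \<le> m\<close> \<open>m \<le> k\<close>
    unfolding J_def by (simp add: card_Un_disjoint)
  then have \<tau>: "reduction \<psi> (sorted_list_of_set J) \<in> coloured_perms k r"
    using reduction_in_coloured_perms[OF \<psi>, of "sorted_list_of_set J"] J by simp
  have "Min J = i"
    using J(2) after(1) by (intro Min_eqI) (auto simp: J_def)
  then have "sorted_list_of_set J = i # sorted_list_of_set (J - {i})"
    using sorted_list_of_set_nonempty[OF J(2)] by (simp add: J_def)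
  moreover have "rank_in ?f J i = m"
    unfolding rank_in_def after(3) using A(2) \<open>1 \<le> m\<close> by simp
  moreover have "reduction \<psi> (sorted_list_of_set J)
      = map (\<lambda>p. (rank_in ?f J p, snd (\<psi> ! p))) (sorted_list_of_set J)"
    unfolding reduction_def using J(2) by simp
  ultimately have "hd (reduction \<psi> (sorted_list_of_set J)) = (m, snd (\<psi> ! i))"
    by simp
  with \<tau> \<open>snd (\<psi> ! i) \<in> I\<close> have "reduction \<psi> (sorted_list_of_set J) \<in> T_set k r m I"
    unfolding T_set_def by simp
  moreover have "sorted_list_of_set J \<in> occurrences (reduction \<psi> (sorted_list_of_set J)) \<psi>"
    using occurrence_reduction[OF \<psi>] J by simp
  ultimately show thesis
    unfolding J_def by (rule that)
qed

lemma insert_Un_eq_iff_disjoint: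
  assumes "A1 \<subseteq> S" "A2 \<subseteq> S" "B1 \<subseteq> L" "B2 \<subseteq> L" "S \<inter> L = {}" "i \<notin> S \<union> L"
  shows "insert i (A1 \<union> B1) = insert i (A2 \<union> B2) \<longleftrightarrow> A1 = A2 \<and> B1 = B2"
proof
  assume eq: "insert i (A1 \<union> B1) = insert i (A2 \<union> B2)"
  have "A1 = insert i (A1 \<union> B1) \<inter> S" "B1 = insert i (A1 \<union> B1) \<inter> L"
    "A2 = insert i (A2 \<union> B2) \<inter> S" "B2 = insert i (A2 \<union> B2) \<inter> L"
    using assms by blast+
  with eq show "A1 = A2 \<and> B1 = B2"
    by simp
qed simp

lemma obtain_two_subsets_card:
  assumes "finite X" "0 < c" "c < card X"
  obtains A B where "A \<subseteq> X" "B \<subseteq> X" "card A = c" "card B = c" "A \<noteq> B"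
proof -
  obtain Y where Y: "Y \<subseteq> X" "card Y = Suc c"
    using obtain_subset_with_card_n[of "Suc c" X] assms(3) by auto
  moreover have "finite Y"
    using Y(1) assms(1) by (rule finite_subset)
  ultimately obtain x y where "x \<in> Y" "y \<in> Y" "x \<noteq> y"
    using card_le_Suc0_iff_eq[of Y] assms(2) by auto
  with Y show thesis
    by (intro that[of "Y - {x}" "Y - {y}"]) (auto simp: card.infinite)
qed

lemma obtain_two_splits:
  assumes "finite S" "finite L" "a \<le> card S" "b \<le> card L" "a + b < card S + card L"
    and "0 < a" "0 < b"
  obtains A1 A2 B1 B2 where "A1 \<subseteq> S" "A2 \<subseteq> S" "card A1 = a" "card A2 = a"
    and "B1 \<subseteq> L" "B2 \<subseteq> L" "card B1 = b" "card B2 = b" and "A1 \<noteq> A2 \<or> B1 \<noteq> B2"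
proof (cases "a < card S")
  case True
  obtain A1 A2 where "A1 \<subseteq> S" "A2 \<subseteq> S" "card A1 = a" "card A2 = a" "A1 \<noteq> A2"
    using obtain_two_subsets_card[OF assms(1,6) True] .
  moreover obtain B where "B \<subseteq> L" "card B = b"
    using obtain_subset_with_card_n[OF assms(4)] .
  ultimately show thesis
    using that by blast
next
  case False
  then have "b < card L"
    using assms(3,5) by linarith
  then obtain B1 B2 where "B1 \<subseteq> L" "B2 \<subseteq> L" "card B1 = b" "card B2 = b" "B1 \<noteq> B2"
    using obtain_two_subsets_card[OF assms(2,7)] by blast
  moreover obtain A where "A \<subseteq> S" "card A = a"
    using obtain_subset_with_card_n[OF assms(3)] .
  ultimately show thesis
    using that by blast
qed

text \<open>This is where \<open>2 \<le> m < k\<close> is needed: both the smaller and the larger entries of an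
  occurrence are then non-empty choices, so one of them can be made in two ways as soon as
  more than \<open>k - 1\<close> entries follow \<open>i\<close>.\<close>
lemma two_occurrences_at_potential_start:
  assumes \<psi>: "\<psi> \<in> coloured_perms n r" and start: "potential_start I m k \<psi> i"
    and "i < n - k" "2 \<le> m" "m < k"
  obtains is1 is2 \<tau>1 \<tau>2 where "is1 \<noteq> is2"
    and "\<tau>1 \<in> T_set k r m I" "is1 \<in> occurrences \<tau>1 \<psi>"
    and "\<tau>2 \<in> T_set k r m I" "is2 \<in> occurrences \<tau>2 \<psi>"
proof -
  let ?S = "smaller_after \<psi> i" and ?L = "larger_after \<psi> i"
  have m: "1 \<le> m" "m \<le> k"
    using \<open>2 \<le> m\<close> \<open>m < k\<close> by simp_all
  have i: "i < n" "snd (\<psi> ! i) \<in> I" "m - 1 \<le> card ?S" "k - m \<le> card ?L"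
    using start coloured_permsD(1)[OF \<psi>] unfolding potential_start_def by auto
  have SL: "?S \<union> ?L = {i<..<n}"
    using smaller_after_Un_larger_after[OF \<psi> i(1)] .
  have fin: "finite ?S" "finite ?L"
    using SL by (metis finite_Un finite_greaterThanLessThan)+
  have "card ?S + card ?L = n - Suc i"
    using card_Un_disjoint[OF fin smaller_after_Int_larger_after] SL by simp
  then have "(m - 1) + (k - m) < card ?S + card ?L"
    using \<open>i < n - k\<close> \<open>2 \<le> m\<close> \<open>m < k\<close> by linarith
  moreover have "0 < m - 1" "0 < k - m"
    using \<open>2 \<le> m\<close> \<open>m < k\<close> by simp_all
  ultimately obtain A1 A2 B1 B2 where A: "A1 \<subseteq> ?S" "A2 \<subseteq> ?S" "card A1 = m - 1" "card A2 = m - 1"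
    and B: "B1 \<subseteq> ?L" "B2 \<subseteq> ?L" "card B1 = k - m" "card B2 = k - m"
    and differ: "A1 \<noteq> A2 \<or> B1 \<noteq> B2"
    by (rule obtain_two_splits[OF fin i(3,4)])
  have "insert i (A1 \<union> B1) \<noteq> insert i (A2 \<union> B2)"
    using insert_Un_eq_iff_disjoint[OF A(1,2) B(1,2) smaller_after_Int_larger_after] differ
    unfolding smaller_after_def larger_after_def by simp
  moreover have "finite (insert i (A1 \<union> B1))" "finite (insert i (A2 \<union> B2))"
    using A(1,2) B(1,2) fin by (auto intro: finite_subset)
  ultimately have
    "sorted_list_of_set (insert i (A1 \<union> B1)) \<noteq> sorted_list_of_set (insert i (A2 \<union> B2))"
    using sorted_list_of_set_inject by blast
  moreover obtain \<tau>1 where "\<tau>1 \<in> T_set k r m I"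
    "sorted_list_of_set (insert i (A1 \<union> B1)) \<in> occurrences \<tau>1 \<psi>"
    by (rule occurrence_at_potential_start[OF \<psi> i(1,2) A(1,3) B(1,3) m])
  moreover obtain \<tau>2 where "\<tau>2 \<in> T_set k r m I"
    "sorted_list_of_set (insert i (A2 \<union> B2)) \<in> occurrences \<tau>2 \<psi>"
    by (rule occurrence_at_potential_start[OF \<psi> i(1,2) A(2,4) B(2,4) m])
  ultimately show thesis
    by (rule that)
qed

section \<open>Characterisation of \<open>S_set\<close>\<close>

definition tail_class :: "nat set \<Rightarrow> nat \<Rightarrow> nat \<Rightarrow> nat \<Rightarrow> (nat \<times> nat) list \<Rightarrow> nat
    \<Rightarrow> (nat \<times> nat) list set" where
  "tail_class I m k r \<phi> n = {\<psi> \<in> coloured_perms n r.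
     (\<forall>i < n - k. \<not> potential_start I m k \<psi> i) \<and> [n - k..<n] \<in> occurrences \<phi> \<psi>}"

lemma tail_class_subset_S_set:
  assumes \<phi>: "\<phi> \<in> T_set k r m I" and "1 \<le> k"
  shows "tail_class I m k r \<phi> n \<subseteq> S_set n r (T_set k r m I) \<phi>"
proof
  fix \<psi> assume "\<psi> \<in> tail_class I m k r \<phi> n"
  then have \<psi>: "\<psi> \<in> coloured_perms n r" and none: "\<forall>i < n - k. \<not> potential_start I m k \<psi> i"
    and tail: "[n - k..<n] \<in> occurrences \<phi> \<psi>"
    unfolding tail_class_def by auto
  have only: "is = [n - k..<n] \<and> \<tau> = \<phi>" if "\<tau> \<in> T_set k r m I" "is \<in> occurrences \<tau> \<psi>" for \<tau> "is"
  proof -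
    have \<tau>: "\<tau> \<in> coloured_perms k r"
      using T_setD(1)[OF that(1) \<open>1 \<le> k\<close>] .
    have "n - k \<le> is ! 0"
      using potential_start_occurrence_head[OF that \<open>1 \<le> k\<close>] none by (meson not_le)
    then have "is = [n - k..<n]"
      using occurrence_eq_upt[OF that(2)] coloured_permsD(1)[OF \<tau>] coloured_permsD(1)[OF \<psi>]
      by blast
    moreover have "\<tau> = \<phi>"
      using occurrences_pattern_unique[OF \<tau> T_setD(1)[OF \<phi> \<open>1 \<le> k\<close>]] that(2) tail calculation
      by simp
    ultimately show ?thesis ..
  qed
  then have "occurrences \<phi> \<psi> = {[n - k..<n]}"
    using tail \<phi> by blast
  moreover have "\<forall>\<tau> \<in> T_set k r m I - {\<phi>}. avoids \<psi> \<tau>"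
    using only unfolding avoids_def contains_def by blast
  ultimately show "\<psi> \<in> S_set n r (T_set k r m I) \<phi>"
    unfolding S_set_def contains_once_def using \<psi> by simp
qed

lemma S_set_subset_tail_class:
  assumes \<phi>: "\<phi> \<in> T_set k r m I" and "2 \<le> m" "m < k"
  shows "S_set n r (T_set k r m I) \<phi> \<subseteq> tail_class I m k r \<phi> n"
proof
  fix \<psi> assume "\<psi> \<in> S_set n r (T_set k r m I) \<phi>"
  then have \<psi>: "\<psi> \<in> coloured_perms n r" and avoid: "\<forall>\<tau> \<in> T_set k r m I - {\<phi>}. avoids \<psi> \<tau>"
    and "card (occurrences \<phi> \<psi>) = 1"
    unfolding S_set_def contains_once_def by auto
  then obtain is0 where is0: "occurrences \<phi> \<psi> = {is0}"
    by (auto simp: card_1_singleton_iff)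
  have unique: "is = is0" if "\<tau> \<in> T_set k r m I" "is \<in> occurrences \<tau> \<psi>" for \<tau> "is"
    using that avoid is0 unfolding avoids_def contains_def by (cases "\<tau> = \<phi>") auto
  have none: "\<forall>i < n - k. \<not> potential_start I m k \<psi> i"
  proof (intro allI impI notI)
    fix i assume "i < n - k" "potential_start I m k \<psi> i"
    then obtain is1 is2 \<tau>1 \<tau>2 where "is1 \<noteq> is2"
      "\<tau>1 \<in> T_set k r m I" "is1 \<in> occurrences \<tau>1 \<psi>"
      "\<tau>2 \<in> T_set k r m I" "is2 \<in> occurrences \<tau>2 \<psi>"
      using two_occurrences_at_potential_start[OF \<psi> _ _ \<open>2 \<le> m\<close> \<open>m < k\<close>] by metis
    with unique show False
      by blast
  qed
  have "1 \<le> k"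
    using \<open>2 \<le> m\<close> \<open>m < k\<close> by simp
  have "is0 \<in> occurrences \<phi> \<psi>"
    using is0 by simp
  moreover have "n - k \<le> is0 ! 0"
    using potential_start_occurrence_head[OF \<phi> \<open>is0 \<in> occurrences \<phi> \<psi>\<close> \<open>1 \<le> k\<close>] none
    by (meson not_le)
  ultimately have "is0 = [n - k..<n]"
    using occurrence_eq_upt coloured_permsD(1)[OF T_setD(1)[OF \<phi> \<open>1 \<le> k\<close>]] coloured_permsD(1)[OF \<psi>]
    by blast
  then show "\<psi> \<in> tail_class I m k r \<phi> n"
    unfolding tail_class_def using \<psi> none is0 by simp
qed

section \<open>Prepending an entry\<close>

definition lift :: "nat \<Rightarrow> nat \<Rightarrow> nat" where
  "lift a v = (if a \<le> v then Suc v else v)"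

definition unlift :: "nat \<Rightarrow> nat \<Rightarrow> nat" where
  "unlift a v = (if a < v then v - 1 else v)"

definition prepend :: "nat \<times> nat \<Rightarrow> (nat \<times> nat) list \<Rightarrow> (nat \<times> nat) list" where
  "prepend x \<psi> = x # map (\<lambda>(v, c). (lift (fst x) v, c)) \<psi>"

lemma lift_less_iff [simp]: "lift a u < lift a v \<longleftrightarrow> u < v"
  unfolding lift_def by auto

lemma lift_eq_iff [simp]: "lift a u = lift a v \<longleftrightarrow> u = v"
  unfolding lift_def by auto

lemma lift_unlift: "v \<noteq> a \<Longrightarrow> lift a (unlift a v) = v"
  unfolding lift_def unlift_def by auto

lemma lift_image:
  assumes "a \<in> {1..Suc n}"
  shows "lift a ` {1..n} = {1..Suc n} - {a}"
proof
  show "lift a ` {1..n} \<subseteq> {1..Suc n} - {a}"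
    unfolding lift_def by auto
  show "{1..Suc n} - {a} \<subseteq> lift a ` {1..n}"
  proof
    fix v assume v: "v \<in> {1..Suc n} - {a}"
    then have "unlift a v \<in> {1..n}"
      using assms unfolding unlift_def by auto
    with v show "v \<in> lift a ` {1..n}"
      by (intro image_eqI[of _ _ "unlift a v"]) (simp_all add: lift_unlift)
  qed
qed

lemma length_prepend [simp]: "length (prepend x \<psi>) = Suc (length \<psi>)"
  unfolding prepend_def by simp

lemma prepend_nth_0 [simp]: "prepend x \<psi> ! 0 = x"
  unfolding prepend_def by simp

lemma prepend_nth_Suc:
  "j < length \<psi> \<Longrightarrow> prepend x \<psi> ! Suc j = (lift (fst x) (fst (\<psi> ! j)), snd (\<psi> ! j))"
  unfolding prepend_def by (simp add: case_prod_beta)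

lemma prepend_inject: "prepend x \<psi> = prepend y \<chi> \<longleftrightarrow> x = y \<and> \<psi> = \<chi>"
proof -
  have "inj (\<lambda>(v, c). (lift a v, c))" for a
    by (auto simp: inj_def)
  then show ?thesis
    unfolding prepend_def by (auto dest: inj_map_eq_map)
qed

lemma prepend_in_coloured_perms:
  assumes \<psi>: "\<psi> \<in> coloured_perms n r" and "a \<in> {1..Suc n}" "c \<in> {1..r}"
  shows "prepend (a, c) \<psi> \<in> coloured_perms (Suc n) r"
proof -
  have fst_prepend: "map fst (prepend (a, c) \<psi>) = a # map (lift a) (map fst \<psi>)"
    unfolding prepend_def by (simp add: case_prod_beta)
  have "set (map (lift a) (map fst \<psi>)) = {1..Suc n} - {a}"
    unfolding set_map[of "lift a"] coloured_permsD(3)[OF \<psi>] by (rule lift_image[OF assms(2)])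
  moreover have "distinct (map (lift a) (map fst \<psi>))"
    using coloured_permsD(2)[OF \<psi>] by (simp add: distinct_map inj_on_def)
  ultimately have "distinct (map fst (prepend (a, c) \<psi>))"
    "set (map fst (prepend (a, c) \<psi>)) = {1..Suc n}"
    unfolding fst_prepend using assms(2) by auto
  moreover have "snd x \<in> {1..r}" if "x \<in> set (prepend (a, c) \<psi>)" for x
    using that \<psi> assms(3) unfolding prepend_def coloured_perms_def by auto
  ultimately show ?thesis
    using coloured_permsD(1)[OF \<psi>] unfolding coloured_perms_def by simp
qed

lemma coloured_perms_Suc_cases:
  assumes \<psi>: "\<psi> \<in> coloured_perms (Suc n) r"
  obtains a c \<psi>' where "\<psi> = prepend (a, c) \<psi>'" "\<psi>' \<in> coloured_perms n r"
    and "a \<in> {1..Suc n}" "c \<in> {1..r}"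
proof -
  obtain a c t where \<psi>_eq: "\<psi> = (a, c) # t"
    using coloured_permsD(1)[OF \<psi>] by (cases \<psi>) auto
  have a: "a \<in> {1..Suc n}" and c: "c \<in> {1..r}"
    using coloured_permsD(4,5)[OF \<psi>, of 0] unfolding \<psi>_eq by auto
  have t: "distinct (map fst t)" "set (map fst t) = {1..Suc n} - {a}"
    using coloured_permsD(2,3)[OF \<psi>] unfolding \<psi>_eq by auto
  define \<psi>' where "\<psi>' = map (\<lambda>(v, c). (unlift a v, c)) t"
  have not_a: "v \<noteq> a" if "(v, c') \<in> set t" for v c'
    using that t(2) by force
  have "map (\<lambda>(v, c). (lift a v, c)) \<psi>' = t"
    unfolding \<psi>'_def by (auto simp: lift_unlift not_a intro!: map_idI)
  then have "\<psi> = prepend (a, c) \<psi>'"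
    unfolding \<psi>_eq prepend_def by simp
  moreover have "\<psi>' \<in> coloured_perms n r"
  proof -
    have lifted: "map (lift a) (map fst \<psi>') = map fst t"
      using arg_cong[OF \<open>map (\<lambda>(v, c). (lift a v, c)) \<psi>' = t\<close>, of "map fst"]
      by (simp add: comp_def split_def)
    then have "distinct (map fst \<psi>')"
      using t(1) by (metis distinct_map)
    moreover have "lift a ` set (map fst \<psi>') = lift a ` {1..n}"
      unfolding lift_image[OF a] t(2)[symmetric] lifted[symmetric] by (rule set_map[symmetric])
    then have "set (map fst \<psi>') = {1..n}"
      by (simp add: inj_image_eq_iff inj_def)
    moreover have "snd x \<in> {1..r}" if "x \<in> set \<psi>'" for x
      using that \<psi> unfolding \<psi>_eq \<psi>'_def coloured_perms_def by auto
    moreover have "length \<psi>' = n"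
      using coloured_permsD(1)[OF \<psi>] unfolding \<psi>_eq \<psi>'_def by simp
    ultimately show ?thesis
      unfolding coloured_perms_def by simp
  qed
  ultimately show thesis
    using that a c by blast
qed

lemma smaller_after_prepend_Suc:
  "i < length \<psi> \<Longrightarrow> smaller_after (prepend x \<psi>) (Suc i) = Suc ` smaller_after \<psi> i"
  unfolding smaller_after_def
  by (auto simp: prepend_nth_Suc image_iff Suc_less_eq2 less_Suc_eq_0_disj)

lemma larger_after_prepend_Suc:
  "i < length \<psi> \<Longrightarrow> larger_after (prepend x \<psi>) (Suc i) = Suc ` larger_after \<psi> i"
  unfolding larger_after_def
  by (auto simp: prepend_nth_Suc image_iff Suc_less_eq2 less_Suc_eq_0_disj)

lemma potential_start_prepend_Suc:
  "potential_start I m k (prepend x \<psi>) (Suc i) \<longleftrightarrow> potential_start I m k \<psi> i"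
proof (cases "i < length \<psi>")
  case True
  then show ?thesis
    unfolding potential_start_def
    by (simp add: smaller_after_prepend_Suc larger_after_prepend_Suc prepend_nth_Suc card_image)
next
  case False
  then show ?thesis
    unfolding potential_start_def by simp
qed

lemma potential_start_prepend_0:
  assumes \<psi>: "\<psi> \<in> coloured_perms n r" and a: "a \<in> {1..Suc n}" and "1 \<le> m" "m \<le> k"
  shows "potential_start I m k (prepend (a, c) \<psi>) 0 \<longleftrightarrow> c \<in> I \<and> a \<in> {m..Suc n + m - k}"
proof -
  have len: "length \<psi> = n"
    using coloured_permsD(1)[OF \<psi>] .
  have "smaller_after (prepend (a, c) \<psi>) 0 = Suc ` {l \<in> {..<n}. fst (\<psi> ! l) < a}"
    unfolding smaller_after_def using len
    by (auto simp: prepend_nth_Suc image_iff lift_def gr0_conv_Suc split: if_splits)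
  moreover have "larger_after (prepend (a, c) \<psi>) 0 = Suc ` {l \<in> {..<n}. a \<le> fst (\<psi> ! l)}"
    unfolding larger_after_def using len
    by (auto simp: prepend_nth_Suc image_iff lift_def gr0_conv_Suc split: if_splits)
  moreover have "{u \<in> {1..n}. u < a} = {1..<a}" "{u \<in> {1..n}. a \<le> u} = {a..n}"
    using a by auto
  ultimately have "card (smaller_after (prepend (a, c) \<psi>) 0) = a - 1"
    "card (larger_after (prepend (a, c) \<psi>) 0) = Suc n - a"
    using card_positions_eq_card_values[OF \<psi>, of "\<lambda>u. u < a"]
      card_positions_eq_card_values[OF \<psi>, of "\<lambda>u. a \<le> u"] a
    by (simp_all add: card_image)
  then show ?thesis
    unfolding potential_start_def using a \<open>1 \<le> m\<close> \<open>m \<le> k\<close> by auto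
qed

lemma occurrences_prepend:
  "map Suc is \<in> occurrences \<tau> (prepend x \<psi>) \<longleftrightarrow> is \<in> occurrences \<tau> \<psi>"
proof -
  have "prepend x \<psi> ! (map Suc is ! j) = (lift (fst x) (fst (\<psi> ! (is ! j))), snd (\<psi> ! (is ! j)))"
    if "\<forall>i \<in> set is. i < length \<psi>" "j < length is" for j
    using that by (simp add: prepend_nth_Suc)
  then show ?thesis
    unfolding occurrences_def by (auto simp: sorted_wrt_map)
qed

definition non_start_entries :: "nat set \<Rightarrow> nat \<Rightarrow> nat \<Rightarrow> nat \<Rightarrow> nat \<Rightarrow> (nat \<times> nat) set" where
  "non_start_entries I m k r n =
     {(a, c) \<in> {1..Suc n} \<times> {1..r}. \<not> (c \<in> I \<and> a \<in> {m..Suc n + m - k})}"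

lemma card_non_start_entries:
  assumes "I \<subseteq> {1..r}" "card I = d" "1 \<le> m" "m \<le> k" "k \<le> Suc n"
  shows "card (non_start_entries I m k r n) = d * (k - 1) + (r - d) * Suc n"
proof -
  have fin: "finite I"
    using assms(1) by (rule finite_subset) simp
  have "non_start_entries I m k r n
      = {1..Suc n} \<times> ({1..r} - I) \<union> ({1..Suc n} - {m..Suc n + m - k}) \<times> I"
    unfolding non_start_entries_def using assms(1) by auto
  moreover have "card ({1..Suc n} \<times> ({1..r} - I)) = Suc n * (r - d)"
    using assms(1,2) fin by (simp add: card_cartesian_product card_Diff_subset)
  moreover have "card (({1..Suc n} - {m..Suc n + m - k}) \<times> I) = (k - 1) * d"
    using assms(2-5) by (subst card_cartesian_product, subst card_Diff_subset) auto
  moreover have "({1..Suc n} \<times> ({1..r} - I)) \<inter> (({1..Suc n} - {m..Suc n + m - k}) \<times> I) = {}"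
    by auto
  ultimately show ?thesis
    using fin by (simp add: card_Un_disjoint)
qed

lemma tail_class_length:
  assumes "\<phi> \<in> coloured_perms k r"
  shows "tail_class I m k r \<phi> k = {\<phi>}"
proof -
  have "[0..<k] \<in> occurrences \<phi> \<psi> \<longleftrightarrow> \<psi> = \<phi>" if "\<psi> \<in> coloured_perms k r" for \<psi>
  proof
    assume "[0..<k] \<in> occurrences \<phi> \<psi>"
    then show "\<psi> = \<phi>"
      using coloured_permsD(1)[OF assms]
      by (intro coloured_perms_eqI[OF that assms]) (auto simp: occurrences_def)
  qed (use coloured_permsD(1)[OF assms] in \<open>auto simp: occurrences_def\<close>)
  then show ?thesis
    unfolding tail_class_def using assms by auto
qed

lemma prepend_in_tail_class_iff:
  assumes "k \<le> n" "1 \<le> m" "m \<le> k"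
    and \<psi>: "\<psi> \<in> coloured_perms n r" and "a \<in> {1..Suc n}" "c \<in> {1..r}"
  shows "prepend (a, c) \<psi> \<in> tail_class I m k r \<phi> (Suc n)
    \<longleftrightarrow> (a, c) \<in> non_start_entries I m k r n \<and> \<psi> \<in> tail_class I m k r \<phi> n"
proof -
  have "(\<forall>i < Suc n - k. \<not> potential_start I m k (prepend (a, c) \<psi>) i)
      \<longleftrightarrow> \<not> potential_start I m k (prepend (a, c) \<psi>) 0
        \<and> (\<forall>i < n - k. \<not> potential_start I m k \<psi> i)"
    using assms(1) by (auto simp: potential_start_prepend_Suc less_Suc_eq_0_disj Suc_diff_le)
  moreover have "[Suc n - k..<Suc n] = map Suc [n - k..<n]"
    using assms(1) by (simp add: map_Suc_upt Suc_diff_le)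
  then have "[Suc n - k..<Suc n] \<in> occurrences \<phi> (prepend (a, c) \<psi>)
      \<longleftrightarrow> [n - k..<n] \<in> occurrences \<phi> \<psi>"
    by (simp only: occurrences_prepend)
  ultimately show ?thesis
    unfolding tail_class_def non_start_entries_def
    using assms(4-) prepend_in_coloured_perms[OF assms(4-)]
      potential_start_prepend_0[OF assms(4,5,2,3), where I = I and c = c]
    by (auto simp del: upt_Suc)
qed

lemma tail_class_Suc:
  assumes "k \<le> n" "1 \<le> m" "m \<le> k"
  shows "tail_class I m k r \<phi> (Suc n)
    = (\<lambda>(x, \<psi>). prepend x \<psi>) ` (non_start_entries I m k r n \<times> tail_class I m k r \<phi> n)"
proof (intro equalityI subsetI)
  fix \<psi> assume \<psi>: "\<psi> \<in> tail_class I m k r \<phi> (Suc n)"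
  then have "\<psi> \<in> coloured_perms (Suc n) r"
    unfolding tail_class_def by simp
  then obtain a c \<psi>' where "\<psi> = prepend (a, c) \<psi>'" "\<psi>' \<in> coloured_perms n r"
    "a \<in> {1..Suc n}" "c \<in> {1..r}"
    by (rule coloured_perms_Suc_cases)
  with \<psi> prepend_in_tail_class_iff[OF assms] show
    "\<psi> \<in> (\<lambda>(x, \<psi>). prepend x \<psi>) ` (non_start_entries I m k r n \<times> tail_class I m k r \<phi> n)"
    by (intro image_eqI[of _ _ "((a, c), \<psi>')"]) simp_all
next
  fix \<psi>
  assume "\<psi> \<in> (\<lambda>(x, \<psi>). prepend x \<psi>) ` (non_start_entries I m k r n \<times> tail_class I m k r \<phi> n)"
  then obtain a c \<psi>' where "\<psi> = prepend (a, c) \<psi>'" "(a, c) \<in> non_start_entries I m k r n"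
    "\<psi>' \<in> tail_class I m k r \<phi> n"
    by auto
  moreover from this have "\<psi>' \<in> coloured_perms n r" "a \<in> {1..Suc n}" "c \<in> {1..r}"
    unfolding tail_class_def non_start_entries_def by auto
  ultimately show "\<psi> \<in> tail_class I m k r \<phi> (Suc n)"
    using prepend_in_tail_class_iff[OF assms] by simp
qed

lemma card_tail_class:
  assumes "\<phi> \<in> coloured_perms k r" "I \<subseteq> {1..r}" "card I = d" "1 \<le> m" "m \<le> k" "k \<le> n"
  shows "card (tail_class I m k r \<phi> n) = (\<Prod>j = k + 1..n. d * (k - 1) + (r - d) * j)"
  using assms(6)
proof (induction n rule: dec_induct)
  case base
  then show ?case
    using tail_class_length[OF assms(1)] by simp
next
  case (step n)
  have "inj_on (\<lambda>(x, \<psi>). prepend x \<psi>) (non_start_entries I m k r n \<times> tail_class I m k r \<phi> n)"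
    by (auto simp: inj_on_def prepend_inject)
  moreover have "finite (non_start_entries I m k r n)"
    unfolding non_start_entries_def by (rule finite_subset[of _ "{1..Suc n} \<times> {1..r}"]) auto
  ultimately have "card (tail_class I m k r \<phi> (Suc n))
      = card (non_start_entries I m k r n) * card (tail_class I m k r \<phi> n)"
    unfolding tail_class_Suc[OF step(1) assms(4,5)] by (simp add: card_image card_cartesian_product)
  then show ?case
    using step card_non_start_entries[OF assms(2-5)] by (simp add: mult.commute)
qed

theorem theorem3:
  fixes r k d n m :: nat and I :: "nat set" and \<phi> :: "(nat \<times> nat) list"
  assumes "r \<ge> 1" and "k \<ge> 3" and "1 \<le> d" and "d \<le> r"
    and "I \<subseteq> {1..r}" and "card I = d"
    and "n \<ge> k + 1" and "2 \<le> m" and "m \<le> k - 1"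
    and "\<phi> \<in> T_set k r m I"
  shows "card (S_set n r (T_set k r m I) \<phi>) = (\<Prod>j = k+1..n. d * (k - 1) + (r - d) * j)"
proof -
  have "1 \<le> m" "m < k" "1 \<le> k" "k \<le> n"
    using assms(2,7,8,9) by simp_all
  have "S_set n r (T_set k r m I) \<phi> = tail_class I m k r \<phi> n"
    by (rule equalityI[OF S_set_subset_tail_class[OF assms(10,8) \<open>m < k\<close>]
          tail_class_subset_S_set[OF assms(10) \<open>1 \<le> k\<close>]])
  also have "card \<dots> = (\<Prod>j = k + 1..n. d * (k - 1) + (r - d) * j)"
    using card_tail_class[OF T_setD(1)[OF assms(10) \<open>1 \<le> k\<close>] assms(5,6) \<open>1 \<le> m\<close>]
      \<open>m < k\<close> \<open>k \<le> n\<close> by simp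
  finally show ?thesis .
qed

end
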